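(* Let $\widehat{V}_2(\mathbf{A};\mathbf{Y}) = \frac{\hat\sigma^2}{n}\Big[1+\frac1n\sum_{i=1}^n\sum_{j=1}^n\mathbf{A}_{ij}\Big]$. Under the asymptotic scaling assumption and the homoskedasticity assumption $\mathrm{var}(X_i)=\mathrm{var}(X_j)$ for all $i,j\in\mathcal{V}$, for every $\epsilon>0$, \[\lim_{n\to\infty}\Pr\big(n\,\mathrm{var}(\overline{X}) - n\widehat{V}_2(\mathbf{A}^\circ;\mathbf{Y})>\epsilon\big)=0.\]
   Context: Setting: $\mathcal{G}=(\mathcal{V},\mathcal{E})$ is a simple undirected graph with a real random variable $X_i$ attached to each vertex $i$. $\mathcal{G}$ is a dependency graph: for all disjoint $\mathcal{V}_1,\mathcal{V}_2\subset\mathcal{V}$ such that no edge of $\mathcal{E}$ joins a vertex of $\mathcal{V}_1$ to a vertex of $\mathcal{V}_2$, $\{X_i:i\in\mathcal{V}_1\}$ is independent of $\{X_j:j\in\mathcal{V}_2\}$. A subset $\mathcal{V}_S\subseteq\mathcal{V}$ with $|\mathcal{V}_S|=n$ is observed, labeled $1,\dots,n$. $\mathcal{G}_S=(\mathcal{V}_S,\mathcal{E}_S)$ is the induced subgraph on $\mathcal{V}_S$, with $n\times n$ adjacency matrix $\mathbf{A}^\circ$ (0-1, symmetric, zero diagonal). $\mathcal{G}_R=(\mathcal{V}_S,\mathcal{E}_R)$ is a subgraph with $\mathcal{E}_R\subseteq\mathcal{E}_S$; $d_i$ is the degree of $i\in\mathcal{V}_S$ in $\mathcal{G}$; $\mathbf{Y}=((X_1,\dots,X_n),(d_1,\dots,d_n),\mathcal{G}_R)$.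 Let $\mu=\frac1n\sum_{i=1}^n \mathrm{E}[X_i]$, $\overline{X}=\frac1n\sum_i X_i$, $\hat\sigma^2=\frac1n\sum_i(X_i-\overline{X})^2$. Asymptotic scaling assumption: a sequence, indexed by $n\to\infty$, of such settings (nested graphs with $|\mathcal{V}|=N_n\ge n$, $|\mathcal{V}_S|=n$), with finite positive constants $c_1,c_2,c_3$ independent of $n$ such that: $\Pr(|X_i-\mu|>c_1)=0$ for all $i\in\mathcal{V}_S$; $\sum_{j}\mathbf{A}^\circ_{ij}\le c_2$ for all $i\in\mathcal{V}_S$; and $\lim_{n\to\infty} n\,\mathrm{var}(\overline{X})=c_3$. *)

theory Defs
  imports "HOL-Probability.Probability"
begin

definition simple_graph :: "'v set \<Rightarrow> ('v \<Rightarrow> 'v \<Rightarrow> bool) \<Rightarrow> bool" where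
  "simple_graph V E \<longleftrightarrow> (\<forall>x y. E x y \<longrightarrow> x \<in> V \<and> y \<in> V \<and> x \<noteq> y \<and> E y x)"

definition dependency_graph ::
  "'a measure \<Rightarrow> 'v set \<Rightarrow> ('v \<Rightarrow> 'v \<Rightarrow> bool) \<Rightarrow> ('v \<Rightarrow> 'a \<Rightarrow> real) \<Rightarrow> bool" where
  "dependency_graph M V E X \<longleftrightarrow>
     (\<forall>V1 V2. V1 \<subseteq> V \<longrightarrow> V2 \<subseteq> V \<longrightarrow> V1 \<inter> V2 = {} \<longrightarrow>
        (\<forall>i\<in>V1. \<forall>j\<in>V2. \<not> E i j) \<longrightarrow>
        prob_space.indep_var M
          (PiM V1 (\<lambda>_. borel)) (\<lambda>\<omega>. restrict (\<lambda>i. X i \<omega>) V1)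
          (PiM V2 (\<lambda>_. borel)) (\<lambda>\<omega>. restrict (\<lambda>j. X j \<omega>) V2))"

definition expect :: "'a measure \<Rightarrow> ('a \<Rightarrow> real) \<Rightarrow> real" where
  "expect M Y = integral\<^sup>L M Y"

definition var :: "'a measure \<Rightarrow> ('a \<Rightarrow> real) \<Rightarrow> real" where
  "var M Y = integral\<^sup>L M (\<lambda>\<omega>. (Y \<omega> - expect M Y)\<^sup>2)"

(* adjacency matrix of the induced subgraph on the observed vertices,
   labelled 1..n via lab *)
definition adj :: "('v \<Rightarrow> 'v \<Rightarrow> bool) \<Rightarrow> (nat \<Rightarrow> 'v) \<Rightarrow> nat \<Rightarrow> nat \<Rightarrow> real" where
  "adj E lab i j = (if E (lab i) (lab j) then 1 else 0)"

definition Xbar :: "nat \<Rightarrow> (nat \<Rightarrow> 'v) \<Rightarrow> ('v \<Rightarrow> 'a \<Rightarrow> real) \<Rightarrow> 'a \<Rightarrow> real" where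
  "Xbar n lab X \<omega> = (\<Sum>i=1..n. X (lab i) \<omega>) / real n"

definition mu :: "'a measure \<Rightarrow> nat \<Rightarrow> (nat \<Rightarrow> 'v) \<Rightarrow> ('v \<Rightarrow> 'a \<Rightarrow> real) \<Rightarrow> real" where
  "mu M n lab X = (\<Sum>i=1..n. expect M (X (lab i))) / real n"

definition sigma_hat_sq :: "nat \<Rightarrow> (nat \<Rightarrow> 'v) \<Rightarrow> ('v \<Rightarrow> 'a \<Rightarrow> real) \<Rightarrow> 'a \<Rightarrow> real" where
  "sigma_hat_sq n lab X \<omega> = (\<Sum>i=1..n. (X (lab i) \<omega> - Xbar n lab X \<omega>)\<^sup>2) / real n"

definition V2_hat :: "nat \<Rightarrow> (nat \<Rightarrow> nat \<Rightarrow> real) \<Rightarrow> (nat \<Rightarrow> 'v) \<Rightarrow> ('v \<Rightarrow> 'a \<Rightarrow> real) \<Rightarrow> 'a \<Rightarrow> real" where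
  "V2_hat n A lab X \<omega> = sigma_hat_sq n lab X \<omega> / real n * (1 + (\<Sum>i=1..n. \<Sum>j=1..n. A i j) / real n)"

end

theory Submission
  imports Defs
begin

text \<open>Let \<open>\<sigma>\<^sup>2\<close> be the common variance and \<open>K = 1 + (\<Sum>i j. A i j) / n\<close>, so that
  \<open>1 \<le> K \<le> 1 + c2\<close> and \<open>n V2_hat = sigma_hat_sq K\<close>. In a dependency graph the cross moment
  of two centred vertex variables vanishes unless they coincide or are adjacent, and is at
  most \<open>\<sigma>\<^sup>2\<close> otherwise; hence \<open>n var Xbar \<le> \<sigma>\<^sup>2 K\<close>, and a deviation beyond \<open>\<delta> (1 + c2)\<close>
  forces \<open>sigma_hat_sq < \<sigma>\<^sup>2 - \<delta>\<close>. As \<open>sigma_hat_sq = (\<Sum>i. (X i - \<mu>)\<^sup>2) / n - (Xbar - \<mu>)\<^sup>2\<close>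
  and \<open>E (X i - \<mu>)\<^sup>2 \<ge> \<sigma>\<^sup>2\<close>, either the centred sum \<open>T = \<Sum>i. (X i - \<mu>)\<^sup>2 - E (X i - \<mu>)\<^sup>2\<close>
  lies below \<open>- n \<delta> / 2\<close> or \<open>(Xbar - \<mu>)\<^sup>2 \<ge> \<delta> / 2\<close>. The same dependency-graph estimate gives
  \<open>E T\<^sup>2 \<le> c1\<^sup>4 n (1 + c2)\<close>, so by Chebyshev both events have probability \<open>O(1/n)\<close>, the
  second because \<open>n var Xbar\<close> converges.\<close>

lemma dependency_graph_integral_mult:
  fixes f g :: "real \<Rightarrow> real"
  assumes "prob_space M" and dep: "dependency_graph M V E X"
    and "u \<in> V" "v \<in> V" "u \<noteq> v" "\<not> E u v"
    and "f \<in> borel_measurable borel" "g \<in> borel_measurable borel"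
    and "integrable M (\<lambda>\<omega>. f (X u \<omega>))" "integrable M (\<lambda>\<omega>. g (X v \<omega>))"
  shows "(\<integral>\<omega>. f (X u \<omega>) * g (X v \<omega>) \<partial>M) = (\<integral>\<omega>. f (X u \<omega>) \<partial>M) * (\<integral>\<omega>. g (X v \<omega>) \<partial>M)"
proof -
  interpret prob_space M by fact
  have "indep_var (PiM {u} (\<lambda>_. borel)) (\<lambda>\<omega>. restrict (\<lambda>i. X i \<omega>) {u})
          (PiM {v} (\<lambda>_. borel)) (\<lambda>\<omega>. restrict (\<lambda>i. X i \<omega>) {v})"
    using dep assms(3-6) unfolding dependency_graph_def by auto
  then have "indep_var borel ((\<lambda>x. f (x u)) \<circ> (\<lambda>\<omega>. restrict (\<lambda>i. X i \<omega>) {u}))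
      borel ((\<lambda>x. g (x v)) \<circ> (\<lambda>\<omega>. restrict (\<lambda>i. X i \<omega>) {v}))"
    by (rule indep_var_compose) (use assms(7,8) in measurable)
  then have "indep_var borel (\<lambda>\<omega>. f (X u \<omega>)) borel (\<lambda>\<omega>. g (X v \<omega>))"
    by (simp add: comp_def)
  then show ?thesis
    by (rule indep_var_lebesgue_integral) fact+
qed

lemma (in prob_space) integral_sum_square_le:
  fixes U :: "'i \<Rightarrow> 'a \<Rightarrow> real" and A :: "'i \<Rightarrow> 'i \<Rightarrow> real"
  assumes "finite I"
    and int: "\<And>i j. i \<in> I \<Longrightarrow> j \<in> I \<Longrightarrow> integrable M (\<lambda>\<omega>. U i \<omega> * U j \<omega>)"
    and le: "\<And>i j. i \<in> I \<Longrightarrow> j \<in> I \<Longrightarrow>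
      (\<integral>\<omega>. U i \<omega> * U j \<omega> \<partial>M) \<le> b * ((if i = j then 1 else 0) + A i j)"
  shows "(\<integral>\<omega>. (\<Sum>i\<in>I. U i \<omega>)\<^sup>2 \<partial>M) \<le> b * (card I + (\<Sum>i\<in>I. \<Sum>j\<in>I. A i j))"
proof -
  have "(\<integral>\<omega>. (\<Sum>i\<in>I. U i \<omega>)\<^sup>2 \<partial>M) = (\<integral>\<omega>. (\<Sum>i\<in>I. \<Sum>j\<in>I. U i \<omega> * U j \<omega>) \<partial>M)"
    by (simp add: power2_eq_square sum_product)
  also have "\<dots> = (\<Sum>i\<in>I. \<Sum>j\<in>I. \<integral>\<omega>. U i \<omega> * U j \<omega> \<partial>M)"
    using int by (simp add: integral_sum Bochner_Integration.integrable_sum)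
  also have "\<dots> \<le> (\<Sum>i\<in>I. \<Sum>j\<in>I. b * ((if i = j then 1 else 0) + A i j))"
    using le by (intro sum_mono) auto
  also have "\<dots> = b * ((\<Sum>i\<in>I. \<Sum>j\<in>I. if i = j then 1 else 0) + (\<Sum>i\<in>I. \<Sum>j\<in>I. A i j))"
    by (simp add: sum_distrib_left sum.distrib distrib_left)
  finally show ?thesis
    using \<open>finite I\<close> by simp
qed

text \<open>Distinct non-adjacent vertices are independent, so their cross moments vanish; every
  other pair contributes at most \<open>b\<close> by the AM-GM inequality.\<close>

lemma dependency_graph_sum_second_moment_le:
  fixes f :: "nat \<Rightarrow> real \<Rightarrow> real" and lab :: "nat \<Rightarrow> 'v" and B :: "nat \<Rightarrow> real"
  assumes "prob_space M" and dep: "dependency_graph M V E X"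
    and I: "finite I" "inj_on lab I" "lab ` I \<subseteq> V"
    and X_meas: "\<And>i. i \<in> I \<Longrightarrow> X (lab i) \<in> borel_measurable M"
    and f_meas: "\<And>i. i \<in> I \<Longrightarrow> f i \<in> borel_measurable borel"
    and f_bounded: "\<And>i. i \<in> I \<Longrightarrow> AE \<omega> in M. \<bar>f i (X (lab i) \<omega>)\<bar> \<le> B i"
    and f_centred: "\<And>i. i \<in> I \<Longrightarrow> (\<integral>\<omega>. f i (X (lab i) \<omega>) \<partial>M) = 0"
    and f_square: "\<And>i. i \<in> I \<Longrightarrow> (\<integral>\<omega>. (f i (X (lab i) \<omega>))\<^sup>2 \<partial>M) \<le> b"
  shows "(\<integral>\<omega>. (\<Sum>i\<in>I. f i (X (lab i) \<omega>))\<^sup>2 \<partial>M)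
    \<le> b * (card I + (\<Sum>i\<in>I. \<Sum>j\<in>I. adj E lab i j))"
proof -
  interpret prob_space M by fact
  define U where "U i \<omega> = f i (X (lab i) \<omega>)" for i \<omega>
  have U_meas: "U i \<in> borel_measurable M" if "i \<in> I" for i
    unfolding U_def using measurable_compose[OF X_meas[OF that] f_meas[OF that]] .
  have U_int: "integrable M (U i)" if "i \<in> I" for i
    using f_bounded[OF that] U_meas[OF that] by (intro integrable_const_bound) (auto simp: U_def)
  have UU_int: "integrable M (\<lambda>\<omega>. U i \<omega> * U j \<omega>)" if "i \<in> I" "j \<in> I" for i j
  proof (rule integrable_const_bound)
    show "AE \<omega> in M. norm (U i \<omega> * U j \<omega>) \<le> B i * B j"
      using f_bounded[OF that(1)] f_bounded[OF that(2)]
      by eventually_elim (auto simp: U_def abs_mult intro: mult_mono')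
  qed (use U_meas that in measurable)
  have square_le: "(\<integral>\<omega>. U i \<omega> * U i \<omega> \<partial>M) \<le> b" if "i \<in> I" for i
    using f_square[OF that] by (simp add: U_def power2_eq_square)
  have b_nonneg: "0 \<le> b" if "i \<in> I" for i
    by (rule order_trans[OF Bochner_Integration.integral_nonneg square_le[OF that]]) simp
  have cov_le: "(\<integral>\<omega>. U i \<omega> * U j \<omega> \<partial>M) \<le> b * ((if i = j then 1 else 0) + adj E lab i j)"
    if ij: "i \<in> I" "j \<in> I" for i j
  proof (cases "i = j \<or> E (lab i) (lab j)")
    case True
    have am_gm: "x * y \<le> (x * x + y * y) / 2" for x y :: real
      using sum_squares_bound[of x y] by (simp add: power2_eq_square)
    have "(\<integral>\<omega>. U i \<omega> * U j \<omega> \<partial>M)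
        \<le> (\<integral>\<omega>. (U i \<omega> * U i \<omega> + U j \<omega> * U j \<omega>) / 2 \<partial>M)"
      using UU_int ij by (intro integral_mono am_gm) auto
    also have "\<dots> \<le> b"
      using square_le[OF ij(1)] square_le[OF ij(2)] UU_int ij by simp
    finally show ?thesis
      using True b_nonneg[OF ij(1)] by (auto simp: adj_def)
  next
    case False
    then have "lab i \<noteq> lab j"
      using I(2) ij by (auto dest: inj_onD)
    then have "(\<integral>\<omega>. U i \<omega> * U j \<omega> \<partial>M) = (\<integral>\<omega>. U i \<omega> \<partial>M) * (\<integral>\<omega>. U j \<omega> \<partial>M)"
      unfolding U_def using False ij I(3) f_meas U_int[unfolded U_def[abs_def]]
      by (intro dependency_graph_integral_mult[OF \<open>prob_space M\<close> dep]) (auto simp: U_def)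
    with False show ?thesis
      using f_centred ij by (simp add: U_def adj_def)
  qed
  show ?thesis
    using integral_sum_square_le[OF I(1) UU_int cov_le] by (simp add: U_def)
qed

lemma (in prob_space) integral_square_diff_eq_var:
  fixes Y :: "'a \<Rightarrow> real"
  assumes "integrable M Y" "integrable M (\<lambda>\<omega>. (Y \<omega>)\<^sup>2)"
  shows "(\<integral>\<omega>. (Y \<omega> - c)\<^sup>2 \<partial>M) = var M Y + (expect M Y - c)\<^sup>2"
proof -
  define m where "m = expect M Y"
  have sq_int: "integrable M (\<lambda>\<omega>. (Y \<omega> - m)\<^sup>2)"
    using assms by (simp add: power2_diff)
  have centred: "(\<integral>\<omega>. Y \<omega> - m \<partial>M) = 0"
    using assms by (simp add: m_def expect_def prob_space)
  have "(\<integral>\<omega>. (Y \<omega> - c)\<^sup>2 \<partial>M)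
      = (\<integral>\<omega>. (Y \<omega> - m)\<^sup>2 + 2 * (m - c) * (Y \<omega> - m) + (m - c)\<^sup>2 \<partial>M)"
    by (rule Bochner_Integration.integral_cong) (auto simp: power2_eq_square algebra_simps)
  also have "\<dots> = (\<integral>\<omega>. (Y \<omega> - m)\<^sup>2 \<partial>M) + 2 * (m - c) * (\<integral>\<omega>. Y \<omega> - m \<partial>M) + (m - c)\<^sup>2"
    using sq_int assms by (simp add: prob_space)
  finally show ?thesis
    unfolding centred by (simp add: var_def m_def)
qed

lemma sum_square_deviation_mean:
  fixes x :: "'i \<Rightarrow> real"
  assumes "finite I" "I \<noteq> {}"
  defines "m \<equiv> (\<Sum>j\<in>I. x j) / card I"
  shows "(\<Sum>i\<in>I. (x i - m)\<^sup>2) / card I = (\<Sum>i\<in>I. (x i - c)\<^sup>2) / card I - (m - c)\<^sup>2"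
proof -
  have card: "real (card I) > 0"
    using assms(1,2) by (simp add: card_gt_0_iff)
  have centred: "(\<Sum>i\<in>I. x i - m) = 0"
    using card by (simp add: sum_subtractf m_def)
  have "(\<Sum>i\<in>I. (x i - c)\<^sup>2) = (\<Sum>i\<in>I. (x i - m)\<^sup>2 + 2 * (m - c) * (x i - m) + (m - c)\<^sup>2)"
    by (intro sum.cong) (auto simp: power2_eq_square algebra_simps)
  also have "\<dots> = (\<Sum>i\<in>I. (x i - m)\<^sup>2) + card I * (m - c)\<^sup>2"
    by (simp add: sum.distrib centred flip: sum_distrib_left)
  finally show ?thesis
    using card by (simp add: field_simps)
qed

locale bounded_dependency_sample = prob_space M
  for M :: "'a measure" and V :: "'v set" and E :: "'v \<Rightarrow> 'v \<Rightarrow> bool"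
    and X :: "'v \<Rightarrow> 'a \<Rightarrow> real" and lab :: "nat \<Rightarrow> 'v" and n :: nat and c1 c2 :: real +
  assumes n_pos: "1 \<le> n"
    and lab_inj: "inj_on lab {1..n}"
    and lab_in: "lab ` {1..n} \<subseteq> V"
    and X_meas: "\<And>v. v \<in> V \<Longrightarrow> X v \<in> borel_measurable M"
    and dep: "dependency_graph M V E X"
    and bounded: "\<And>i. i \<in> {1..n} \<Longrightarrow>
      measure M {\<omega> \<in> space M. \<bar>X (lab i) \<omega> - mu M n lab X\<bar> > c1} = 0"
    and degree: "\<And>i. i \<in> {1..n} \<Longrightarrow> (\<Sum>j=1..n. adj E lab i j) \<le> c2"
    and homosk: "\<And>u v. u \<in> V \<Longrightarrow> v \<in> V \<Longrightarrow> var M (X u) = var M (X v)"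
begin

abbreviation mean :: real where
  "mean \<equiv> mu M n lab X"

definition common_var :: real where
  "common_var = var M (X (lab 1))"

definition edge_sum :: real where
  "edge_sum = (\<Sum>i=1..n. \<Sum>j=1..n. adj E lab i j)"

definition mean_sq_dev :: "nat \<Rightarrow> real" where
  "mean_sq_dev i = (\<integral>\<omega>. (X (lab i) \<omega> - mean)\<^sup>2 \<partial>M)"

definition sq_dev_fluct :: "'a \<Rightarrow> real" where
  "sq_dev_fluct \<omega> = (\<Sum>i=1..n. (X (lab i) \<omega> - mean)\<^sup>2 - mean_sq_dev i)"

lemma n_gt_0: "real n > 0"
  using n_pos by simp

lemma X_lab_measurable: "i \<in> {1..n} \<Longrightarrow> X (lab i) \<in> borel_measurable M"
  using X_meas lab_in by (meson image_subset_iff)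

lemma AE_deviation_bounded: "AE \<omega> in M. \<forall>i\<in>{1..n}. \<bar>X (lab i) \<omega> - mean\<bar> \<le> c1"
proof (intro eventually_ball_finite ballI)
  fix i assume i: "i \<in> {1..n}"
  have [measurable]: "X (lab i) \<in> borel_measurable M"
    using X_lab_measurable[OF i] .
  have "{\<omega> \<in> space M. c1 < \<bar>X (lab i) \<omega> - mean\<bar>} \<in> null_sets M"
    using bounded[OF i] by (intro null_setsI) (auto simp: emeasure_eq_measure)
  from AE_not_in[OF this] show "AE \<omega> in M. \<bar>X (lab i) \<omega> - mean\<bar> \<le> c1"
    using AE_space by eventually_elim auto
qed simp

lemma c1_nonneg: "0 \<le> c1"
proof -
  have "AE \<omega> in M. 0 \<le> c1"
    using AE_deviation_bounded by eventually_elim (use n_pos in force)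
  then show ?thesis
    by simp
qed

lemma integrable_transform_X_lab:
  fixes g :: "real \<Rightarrow> real"
  assumes "i \<in> {1..n}" "g \<in> borel_measurable borel"
    and "\<And>t. \<bar>t - mean\<bar> \<le> c1 \<Longrightarrow> \<bar>g t\<bar> \<le> B"
  shows "integrable M (\<lambda>\<omega>. g (X (lab i) \<omega>))"
proof (rule integrable_const_bound)
  show "AE \<omega> in M. norm (g (X (lab i) \<omega>)) \<le> B"
    using AE_deviation_bounded by eventually_elim (use assms in auto)
  show "(\<lambda>\<omega>. g (X (lab i) \<omega>)) \<in> borel_measurable M"
    using measurable_compose[OF X_lab_measurable[OF assms(1)] assms(2)] .
qed

lemma integrable_X_lab: "i \<in> {1..n} \<Longrightarrow> integrable M (X (lab i))"
  using integrable_transform_X_lab[of i "\<lambda>t. t" "\<bar>mean\<bar> + c1"] by simp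

lemma integrable_square_X_lab: "i \<in> {1..n} \<Longrightarrow> integrable M (\<lambda>\<omega>. (X (lab i) \<omega>)\<^sup>2)"
  using integrable_transform_X_lab[of i "\<lambda>t. t\<^sup>2" "(\<bar>mean\<bar> + c1)\<^sup>2"]
  by (simp add: abs_le_square_iff[symmetric])

lemma var_X_lab: "i \<in> {1..n} \<Longrightarrow> var M (X (lab i)) = common_var"
  unfolding common_var_def using lab_in n_pos by (intro homosk) auto

lemma common_var_le_mean_sq_dev: "i \<in> {1..n} \<Longrightarrow> common_var \<le> mean_sq_dev i"
  unfolding mean_sq_dev_def
  by (simp add: integral_square_diff_eq_var integrable_X_lab integrable_square_X_lab var_X_lab)

lemma integrable_sq_dev: "i \<in> {1..n} \<Longrightarrow> integrable M (\<lambda>\<omega>. (X (lab i) \<omega> - mean)\<^sup>2)"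
  by (intro integrable_transform_X_lab[where B="c1\<^sup>2"]) (auto simp: abs_le_square_iff[symmetric])

lemma mean_sq_dev_le: "i \<in> {1..n} \<Longrightarrow> mean_sq_dev i \<le> c1\<^sup>2"
  unfolding mean_sq_dev_def
proof (rule integral_le_const)
  assume i: "i \<in> {1..n}"
  show "integrable M (\<lambda>\<omega>. (X (lab i) \<omega> - mean)\<^sup>2)"
    using integrable_sq_dev[OF i] .
  show "AE \<omega> in M. (X (lab i) \<omega> - mean)\<^sup>2 \<le> c1\<^sup>2"
    using AE_deviation_bounded by eventually_elim (use i c1_nonneg in \<open>auto simp: abs_le_square_iff[symmetric]\<close>)
qed


lemma edge_sum_nonneg: "0 \<le> edge_sum"
  unfolding edge_sum_def adj_def by (intro sum_nonneg) auto

lemma edge_sum_le: "edge_sum \<le> n * c2"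
proof -
  have "edge_sum \<le> (\<Sum>i=1..n. c2)"
    unfolding edge_sum_def using degree by (intro sum_mono) auto
  then show ?thesis
    by simp
qed

lemma Xbar_measurable: "Xbar n lab X \<in> borel_measurable M"
  unfolding Xbar_def[abs_def] using X_lab_measurable by measurable

lemma Xbar_minus_mean: "Xbar n lab X \<omega> - mean = (\<Sum>i=1..n. X (lab i) \<omega> - mean) / n"
  using n_gt_0 by (simp add: Xbar_def sum_subtractf diff_divide_distrib)

lemma Xbar_minus_mean_centred:
  "Xbar n lab X \<omega> - mean = (\<Sum>i=1..n. X (lab i) \<omega> - expect M (X (lab i))) / n"
  by (simp add: Xbar_def mu_def sum_subtractf diff_divide_distrib)

lemma expect_Xbar: "expect M (Xbar n lab X) = mean"
proof -
  have "(\<integral>\<omega>. (\<Sum>i=1..n. X (lab i) \<omega>) \<partial>M) = (\<Sum>i=1..n. expect M (X (lab i)))"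
    unfolding expect_def by (rule Bochner_Integration.integral_sum) (rule integrable_X_lab)
  then show ?thesis
    by (simp add: Xbar_def[abs_def] expect_def mu_def)
qed

lemma var_Xbar_eq: "var M (Xbar n lab X) = (\<integral>\<omega>. (Xbar n lab X \<omega> - mean)\<^sup>2 \<partial>M)"
  by (simp add: var_def expect_Xbar)

lemma AE_Xbar_deviation_bounded: "AE \<omega> in M. \<bar>Xbar n lab X \<omega> - mean\<bar> \<le> c1"
  using AE_deviation_bounded
proof eventually_elim
  case (elim \<omega>)
  have "\<bar>\<Sum>i=1..n. X (lab i) \<omega> - mean\<bar> \<le> (\<Sum>i=1..n. c1)"
    using elim by (intro order_trans[OF sum_abs sum_mono]) auto
  then show ?case
    using n_gt_0 by (simp add: Xbar_minus_mean divide_le_eq mult.commute)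
qed

lemma n_var_Xbar_le: "n * var M (Xbar n lab X) \<le> common_var * (1 + edge_sum / n)"
proof -
  define Z where "Z i \<omega> = X (lab i) \<omega> - expect M (X (lab i))" for i \<omega>
  have "(\<integral>\<omega>. (\<Sum>i=1..n. Z i \<omega>)\<^sup>2 \<partial>M) \<le> common_var * (card {1..n} + edge_sum)"
    unfolding Z_def edge_sum_def
  proof (rule dependency_graph_sum_second_moment_le[where f="\<lambda>i t. t - expect M (X (lab i))"
        and B="\<lambda>i. \<bar>mean\<bar> + c1 + \<bar>expect M (X (lab i))\<bar>", OF prob_space_axioms dep _ lab_inj lab_in])
    fix i assume i: "i \<in> {1..n}"
    show "AE \<omega> in M. \<bar>X (lab i) \<omega> - expect M (X (lab i))\<bar> \<le> \<bar>mean\<bar> + c1 + \<bar>expect M (X (lab i))\<bar>"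
      using AE_deviation_bounded by eventually_elim (drule bspec[OF _ i], arith)
    show "(\<integral>\<omega>. X (lab i) \<omega> - expect M (X (lab i)) \<partial>M) = 0"
      using integrable_X_lab[OF i] by (simp add: expect_def prob_space)
    show "(\<integral>\<omega>. (X (lab i) \<omega> - expect M (X (lab i)))\<^sup>2 \<partial>M) \<le> common_var"
      using var_X_lab[OF i] by (simp add: var_def)
  qed (use X_lab_measurable in auto)
  moreover have "n * var M (Xbar n lab X) = (\<integral>\<omega>. (\<Sum>i=1..n. Z i \<omega>)\<^sup>2 \<partial>M) / n"
    using n_gt_0 by (simp add: var_Xbar_eq Xbar_minus_mean_centred Z_def power_divide power2_eq_square)
  ultimately show ?thesis
    using n_gt_0 by (simp add: divide_right_mono field_simps)
qed


lemma sigma_hat_sq_eq: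
  "sigma_hat_sq n lab X \<omega> = (\<Sum>i=1..n. (X (lab i) \<omega> - mean)\<^sup>2) / n - (Xbar n lab X \<omega> - mean)\<^sup>2"
proof -
  have "{1..n} \<noteq> {}"
    using n_pos by simp
  from sum_square_deviation_mean[OF finite_atLeastAtMost this, of "\<lambda>i. X (lab i) \<omega>" mean]
  show ?thesis
    unfolding sigma_hat_sq_def Xbar_def by simp
qed

lemma n_V2_hat_eq:
  "n * V2_hat n (adj E lab) lab X \<omega> = sigma_hat_sq n lab X \<omega> * (1 + edge_sum / n)"
  using n_gt_0 by (simp add: V2_hat_def edge_sum_def)

lemma mean_sq_dev_nonneg: "0 \<le> mean_sq_dev i"
  unfolding mean_sq_dev_def by (rule Bochner_Integration.integral_nonneg) simp

lemma sq_dev_term_bounded: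
  assumes "i \<in> {1..n}" "\<bar>t - mean\<bar> \<le> c1"
  shows "\<bar>(t - mean)\<^sup>2 - mean_sq_dev i\<bar> \<le> c1\<^sup>2"
proof -
  have "(t - mean)\<^sup>2 \<le> c1\<^sup>2" "0 \<le> (t - mean)\<^sup>2"
    using assms(2) c1_nonneg by (simp_all add: abs_le_square_iff[symmetric])
  then show ?thesis
    using mean_sq_dev_nonneg[of i] mean_sq_dev_le[OF assms(1)] unfolding abs_le_iff by linarith
qed

lemma sq_dev_fluct_measurable: "sq_dev_fluct \<in> borel_measurable M"
  unfolding sq_dev_fluct_def[abs_def] using X_lab_measurable by measurable

lemma AE_sq_dev_fluct_bounded: "AE \<omega> in M. \<bar>sq_dev_fluct \<omega>\<bar> \<le> n * c1\<^sup>2"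
  using AE_deviation_bounded
proof eventually_elim
  case (elim \<omega>)
  have "\<bar>sq_dev_fluct \<omega>\<bar> \<le> (\<Sum>i=1..n. c1\<^sup>2)"
    unfolding sq_dev_fluct_def using elim sq_dev_term_bounded
    by (intro order_trans[OF sum_abs sum_mono]) auto
  then show ?case
    by simp
qed

lemma sq_dev_fluct_second_moment: "(\<integral>\<omega>. (sq_dev_fluct \<omega>)\<^sup>2 \<partial>M) \<le> c1^4 * (n + edge_sum)"
proof -
  have "(\<integral>\<omega>. (\<Sum>i=1..n. (X (lab i) \<omega> - mean)\<^sup>2 - mean_sq_dev i)\<^sup>2 \<partial>M)
      \<le> c1^4 * (card {1..n} + edge_sum)"
    unfolding edge_sum_def
  proof (rule dependency_graph_sum_second_moment_le[where f="\<lambda>i t. (t - mean)\<^sup>2 - mean_sq_dev i"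
        and B="\<lambda>_. c1\<^sup>2", OF prob_space_axioms dep _ lab_inj lab_in])
    fix i assume i: "i \<in> {1..n}"
    show "AE \<omega> in M. \<bar>(X (lab i) \<omega> - mean)\<^sup>2 - mean_sq_dev i\<bar> \<le> c1\<^sup>2"
      using AE_deviation_bounded by eventually_elim (use i sq_dev_term_bounded in auto)
    show "(\<integral>\<omega>. (X (lab i) \<omega> - mean)\<^sup>2 - mean_sq_dev i \<partial>M) = 0"
      using integrable_sq_dev[OF i] by (simp add: mean_sq_dev_def prob_space)
    have term_sq_le: "((t - mean)\<^sup>2 - mean_sq_dev i)\<^sup>2 \<le> c1^4" if "\<bar>t - mean\<bar> \<le> c1" for t
      using power_mono[OF sq_dev_term_bounded[OF i that] abs_ge_zero, of 2]
      by (simp add: power_mult[symmetric])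
    show "(\<integral>\<omega>. ((X (lab i) \<omega> - mean)\<^sup>2 - mean_sq_dev i)\<^sup>2 \<partial>M) \<le> c1^4"
    proof (rule integral_le_const)
      show "integrable M (\<lambda>\<omega>. ((X (lab i) \<omega> - mean)\<^sup>2 - mean_sq_dev i)\<^sup>2)"
        using i term_sq_le by (intro integrable_transform_X_lab) auto
      show "AE \<omega> in M. ((X (lab i) \<omega> - mean)\<^sup>2 - mean_sq_dev i)\<^sup>2 \<le> c1^4"
        using AE_deviation_bounded by eventually_elim (use i term_sq_le in auto)
    qed
  qed (use X_lab_measurable in auto)
  then show ?thesis
    by (simp add: sq_dev_fluct_def)
qed

lemma sigma_hat_sq_ge:
  "common_var + sq_dev_fluct \<omega> / n - (Xbar n lab X \<omega> - mean)\<^sup>2 \<le> sigma_hat_sq n lab X \<omega>"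
proof -
  have "(\<Sum>i=1..n. common_var) \<le> (\<Sum>i=1..n. mean_sq_dev i)"
    using common_var_le_mean_sq_dev by (intro sum_mono) auto
  moreover have "(\<Sum>i=1..n. (X (lab i) \<omega> - mean)\<^sup>2) = (\<Sum>i=1..n. mean_sq_dev i) + sq_dev_fluct \<omega>"
    by (simp add: sq_dev_fluct_def sum_subtractf)
  ultimately show ?thesis
    using n_gt_0 by (simp add: sigma_hat_sq_eq field_simps)
qed

lemma large_deviation_cases:
  fixes \<delta> :: real
  assumes "0 < \<delta>"
    and dev: "n * var M (Xbar n lab X) - n * V2_hat n (adj E lab) lab X \<omega> > \<delta> * (1 + c2)"
  shows "(n * \<delta> / 2)\<^sup>2 \<le> (sq_dev_fluct \<omega>)\<^sup>2 \<or> \<delta> / 2 \<le> (Xbar n lab X \<omega> - mean)\<^sup>2"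
proof -
  define K where "K = 1 + edge_sum / n"
  have K: "1 \<le> K" "K \<le> 1 + c2"
    using edge_sum_nonneg edge_sum_le n_gt_0 by (auto simp: K_def field_simps)
  have "\<delta> * K \<le> \<delta> * (1 + c2)"
    using K(2) assms(1) by simp
  also have "\<dots> < (common_var - sigma_hat_sq n lab X \<omega>) * K"
    using dev n_var_Xbar_le n_V2_hat_eq[of \<omega>] by (simp add: K_def left_diff_distrib)
  finally have "\<delta> < common_var - sigma_hat_sq n lab X \<omega>"
    using K(1) by simp
  then have gap: "\<delta> < - (sq_dev_fluct \<omega> / n) + (Xbar n lab X \<omega> - mean)\<^sup>2"
    using sigma_hat_sq_ge[of \<omega>] by linarith
  show ?thesis
  proof (cases "\<delta> / 2 \<le> (Xbar n lab X \<omega> - mean)\<^sup>2")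
    case False
    with gap have "\<delta> / 2 < - (sq_dev_fluct \<omega> / n)"
      by linarith
    then have "n * \<delta> / 2 < - sq_dev_fluct \<omega>"
      using n_gt_0 by (simp add: field_simps)
    then have "(n * \<delta> / 2)\<^sup>2 \<le> (- sq_dev_fluct \<omega>)\<^sup>2"
      using n_gt_0 assms(1) by (intro power_mono) auto
    then show ?thesis
      by simp
  qed simp
qed

lemma sq_dev_fluct_tail_bound:
  fixes \<delta> :: real
  assumes "0 < \<delta>"
  shows "measure M {\<omega> \<in> space M. (n * \<delta> / 2)\<^sup>2 \<le> (sq_dev_fluct \<omega>)\<^sup>2}
    \<le> 4 * c1^4 * (1 + c2) / (n * \<delta>\<^sup>2)"
proof -
  have [measurable]: "sq_dev_fluct \<in> borel_measurable M"
    by (fact sq_dev_fluct_measurable)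
  have "integrable M (\<lambda>\<omega>. (sq_dev_fluct \<omega>)\<^sup>2)"
    using AE_sq_dev_fluct_bounded
    by (intro integrable_const_bound[where B="(n * c1\<^sup>2)\<^sup>2"])
       (auto elim!: eventually_mono simp: abs_le_square_iff[symmetric])
  then have "measure M {\<omega> \<in> space M. (n * \<delta> / 2)\<^sup>2 \<le> (sq_dev_fluct \<omega>)\<^sup>2}
      \<le> (\<integral>\<omega>. (sq_dev_fluct \<omega>)\<^sup>2 \<partial>M) / (n * \<delta> / 2)\<^sup>2"
    using n_gt_0 assms by (intro integral_Markov_inequality_measure[where A="space M"]) auto
  also have "\<dots> \<le> c1^4 * (n * (1 + c2)) / (n * \<delta> / 2)\<^sup>2"
  proof (intro divide_right_mono order_trans[OF sq_dev_fluct_second_moment])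
    show "c1^4 * (n + edge_sum) \<le> c1^4 * (n * (1 + c2))"
      using edge_sum_le by (intro mult_left_mono) (auto simp: distrib_left)
  qed simp
  also have "\<dots> = 4 * c1^4 * (1 + c2) / (n * \<delta>\<^sup>2)"
    using n_gt_0 assms by (simp add: field_simps power2_eq_square)
  finally show ?thesis .
qed

lemma deviation_tail_bound:
  fixes \<delta> :: real
  assumes "0 < \<delta>"
  shows "measure M {\<omega> \<in> space M.
      n * var M (Xbar n lab X) - n * V2_hat n (adj E lab) lab X \<omega> > \<delta> * (1 + c2)}
    \<le> (4 * c1^4 * (1 + c2) / \<delta>\<^sup>2 + 2 / \<delta> * (n * var M (Xbar n lab X))) / n"
proof -
  have [measurable]: "sq_dev_fluct \<in> borel_measurable M" "Xbar n lab X \<in> borel_measurable M"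
    by (fact sq_dev_fluct_measurable Xbar_measurable)+
  let ?F = "{\<omega> \<in> space M. (n * \<delta> / 2)\<^sup>2 \<le> (sq_dev_fluct \<omega>)\<^sup>2}"
  let ?D = "{\<omega> \<in> space M. \<delta> / 2 \<le> (Xbar n lab X \<omega> - mean)\<^sup>2}"
  have "integrable M (\<lambda>\<omega>. (Xbar n lab X \<omega> - mean)\<^sup>2)"
    using AE_Xbar_deviation_bounded
    by (intro integrable_const_bound[where B="c1\<^sup>2"])
       (auto elim!: eventually_mono simp: abs_le_square_iff[symmetric])
  then have D: "measure M ?D \<le> var M (Xbar n lab X) / (\<delta> / 2)"
    unfolding var_Xbar_eq using assms
    by (intro integral_Markov_inequality_measure[where A="space M"]) auto
  have "measure M {\<omega> \<in> space M.
      n * var M (Xbar n lab X) - n * V2_hat n (adj E lab) lab X \<omega> > \<delta> * (1 + c2)}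
      \<le> measure M (?F \<union> ?D)"
    using large_deviation_cases[OF assms] by (intro finite_measure_mono) auto
  also have "\<dots> \<le> measure M ?F + measure M ?D"
    by (rule measure_Un_le) measurable
  also have "\<dots> \<le> 4 * c1^4 * (1 + c2) / (n * \<delta>\<^sup>2) + var M (Xbar n lab X) / (\<delta> / 2)"
    using sq_dev_fluct_tail_bound[OF assms] D by (rule add_mono)
  also have "\<dots> = (4 * c1^4 * (1 + c2) / \<delta>\<^sup>2 + 2 / \<delta> * (n * var M (Xbar n lab X))) / n"
    using n_gt_0 assms by (simp add: field_simps power2_eq_square)
  finally show ?thesis .
qed

end

theorem proposition2:
  fixes M :: "nat \<Rightarrow> 'a measure"
    and V :: "nat \<Rightarrow> 'v set"
    and E :: "nat \<Rightarrow> 'v \<Rightarrow> 'v \<Rightarrow> bool"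
    and X :: "nat \<Rightarrow> 'v \<Rightarrow> 'a \<Rightarrow> real"
    and lab :: "nat \<Rightarrow> nat \<Rightarrow> 'v"
    and c1 c2 c3 :: real
  assumes prob: "\<And>n. prob_space (M n)"
    and graph: "\<And>n. simple_graph (V n) (E n)"
    and finV: "\<And>n. finite (V n)"
    and cardV: "\<And>n. n \<le> card (V n)"
    and lab_inj: "\<And>n. inj_on (lab n) {1..n}"
    and lab_in: "\<And>n. lab n ` {1..n} \<subseteq> V n"
    and meas: "\<And>n i. i \<in> V n \<Longrightarrow> X n i \<in> borel_measurable (M n)"
    and dep: "\<And>n. dependency_graph (M n) (V n) (E n) (X n)"
    and c_pos: "c1 > 0" "c2 > 0" "c3 > 0"
    and bounded: "\<And>n i. i \<in> {1..n} \<Longrightarrow>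
        measure (M n) {\<omega> \<in> space (M n).
           \<bar>X n (lab n i) \<omega> - mu (M n) n (lab n) (X n)\<bar> > c1} = 0"
    and degree: "\<And>n i. i \<in> {1..n} \<Longrightarrow> (\<Sum>j=1..n. adj (E n) (lab n) i j) \<le> c2"
    and var_lim: "(\<lambda>n. real n * var (M n) (Xbar n (lab n) (X n))) \<longlonglongrightarrow> c3"
    and homosk: "\<And>n i j. i \<in> V n \<Longrightarrow> j \<in> V n \<Longrightarrow> var (M n) (X n i) = var (M n) (X n j)"
  shows "\<forall>\<epsilon>>0. (\<lambda>n. measure (M n) {\<omega> \<in> space (M n).
            real n * var (M n) (Xbar n (lab n) (X n))
            - real n * V2_hat n (adj (E n) (lab n)) (lab n) (X n) \<omega> > \<epsilon>}) \<longlonglongrightarrow> 0"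
proof (intro allI impI)
  fix \<epsilon> :: real
  assume "\<epsilon> > 0"
  define \<delta> where "\<delta> = \<epsilon> / (1 + c2)"
  have \<delta>: "0 < \<delta>" "\<delta> * (1 + c2) = \<epsilon>"
    using \<open>\<epsilon> > 0\<close> c_pos by (auto simp: \<delta>_def)
  define bound where "bound n =
    (4 * c1^4 * (1 + c2) / \<delta>\<^sup>2 + 2 / \<delta> * (real n * var (M n) (Xbar n (lab n) (X n)))) / real n" for n
  have tail_le: "measure (M n) {\<omega> \<in> space (M n).
            real n * var (M n) (Xbar n (lab n) (X n))
            - real n * V2_hat n (adj (E n) (lab n)) (lab n) (X n) \<omega> > \<epsilon>} \<le> bound n"
    if "1 \<le> n" for n
  proof -
    interpret bounded_dependency_sample "M n" "V n" "E n" "X n" "lab n" n c1 c2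
      by (rule bounded_dependency_sample.intro[OF prob], unfold_locales)
        (use that lab_inj lab_in degree in \<open>auto intro: meas dep bounded homosk\<close>)
    show ?thesis
      using deviation_tail_bound[OF \<delta>(1)] by (simp only: \<delta>(2) bound_def)
  qed
  have bound_lim: "bound \<longlonglongrightarrow> 0"
    unfolding bound_def
    by (intro tendsto_divide_0[OF tendsto_add[OF tendsto_const tendsto_mult[OF tendsto_const var_lim]]]
        filterlim_at_top_imp_at_infinity filterlim_real_sequentially)
  show "(\<lambda>n. measure (M n) {\<omega> \<in> space (M n).
            real n * var (M n) (Xbar n (lab n) (X n))
            - real n * V2_hat n (adj (E n) (lab n)) (lab n) (X n) \<omega> > \<epsilon>}) \<longlonglongrightarrow> 0"
    by (rule tendsto_sandwich[OF _ _ tendsto_const bound_lim])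
      (auto intro: tail_le eventually_sequentiallyI[of 1])
qed

end
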